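(* Let $A\in\mathbb{C}^{n\times n}$ and $m\in\mathbb{N}=\{1,2,\dots\}$. Then $AA^{\#_m}A=A$ if and only if $\mathrm{Ind}(A)\le 1$.
   Context: For $A\in\mathbb{C}^{n\times n}$: $A^\dagger$ Moore–Penrose inverse, $P_A=AA^\dagger$, $\mathcal{R}(\cdot)$ column space. The index $\mathrm{Ind}(A)$ is the smallest nonnegative integer $k$ with $\mathcal{R}(A^k)=\mathcal{R}(A^{k+1})$ ($A^0=I_n$). The core-EP inverse $A^{\mathrm{cEP}}$ is the unique $X$ with $XAX=X$ and $\mathcal{R}(X)=\mathcal{R}(X^* )=\mathcal{R}(A^k)$. For $m\in\mathbb{N}$, the $m$-weak group inverse is $A^{\mathrm{WG}_m}:=(A^{\mathrm{cEP}})^{m+1}A^m$ and the $m$-weak core inverse is $A^{\#_m}:=A^{\mathrm{WG}_m}P_{A^m}$. *)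

theory Defs
  imports "HOL-Analysis.Analysis"
begin

definition conj_transpose :: "complex^'n^'m \<Rightarrow> complex^'m^'n" where
  "conj_transpose A = (\<chi> i j. cnj (A $ j $ i))"

definition col_space :: "complex^'n^'m \<Rightarrow> (complex^'m) set" where
  "col_space A = range (\<lambda>x. A *v x)"

fun mat_pow :: "complex^'n^'n \<Rightarrow> nat \<Rightarrow> complex^'n^'n" where
  "mat_pow A 0 = mat 1"
| "mat_pow A (Suc k) = A ** mat_pow A k"

definition mp_inverse :: "complex^'n^'n \<Rightarrow> complex^'n^'n" where
  "mp_inverse A = (THE X. A ** X ** A = A \<and> X ** A ** X = X \<and>
      conj_transpose (A ** X) = A ** X \<and> conj_transpose (X ** A) = X ** A)"

definition mat_index :: "complex^'n^'n \<Rightarrow> nat" where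
  "mat_index A = (LEAST k. col_space (mat_pow A k) = col_space (mat_pow A (Suc k)))"

definition core_EP :: "complex^'n^'n \<Rightarrow> complex^'n^'n" where
  "core_EP A = (THE X. X ** A ** X = X \<and>
      col_space X = col_space (conj_transpose X) \<and>
      col_space (conj_transpose X) = col_space (mat_pow A (mat_index A)))"

definition weak_group_m :: "nat \<Rightarrow> complex^'n^'n \<Rightarrow> complex^'n^'n" where
  "weak_group_m m A = mat_pow (core_EP A) (m + 1) ** mat_pow A m"

definition weak_core_m :: "nat \<Rightarrow> complex^'n^'n \<Rightarrow> complex^'n^'n" where
  "weak_core_m m A = weak_group_m m A ** (mat_pow A m ** mp_inverse (mat_pow A m))"

end

theory Submission
  imports Defs
begin

text \<open>
  Let k be the index of A, S = R(A^k) and E the core-EP inverse of A. The matrix A maps S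
  bijectively onto itself, and E is the inverse of this restriction composed with the
  orthogonal projector P onto S; hence A E = P and E A is the identity on S.
  The m-weak core inverse begins with the factor E, so R(A A^(#m)) lies in R(A E) = S, and
  A A^(#m) A = A forces R(A) to lie in R(A^k), which means k <= 1. Conversely, if k <= 1
  then R(A) = R(A^m) = S, so P_(A^m) fixes R(A) and E^m A^m fixes S, whence
  A A^(#m) A x = A E E^m A^m (A x) = A E (A x) = A x.
\<close>

lemma conj_transpose_mult: "conj_transpose (A ** B) = conj_transpose B ** conj_transpose A"
  by (simp add: conj_transpose_def matrix_matrix_mult_def vec_eq_iff mult.commute)

lemma inner_complex_mult_left: "inner (a * b) (c :: complex) = inner b (cnj a * c)"
  by (simp add: inner_complex_def algebra_simps)

lemma inner_matrix_vector_mult_left: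
  "inner (A *v x) y = inner x (conj_transpose A *v y)"
proof -
  have "inner (A *v x) y = (\<Sum>i\<in>UNIV. \<Sum>j\<in>UNIV. inner (A $ i $ j * x $ j) (y $ i))"
    by (simp add: inner_vec_def matrix_vector_mult_def inner_sum_left)
  also have "\<dots> = (\<Sum>j\<in>UNIV. \<Sum>i\<in>UNIV. inner (x $ j) (cnj (A $ i $ j) * y $ i))"
    by (subst sum.swap) (simp add: inner_complex_mult_left)
  also have "\<dots> = inner x (conj_transpose A *v y)"
    by (simp add: inner_vec_def matrix_vector_mult_def conj_transpose_def inner_sum_right)
  finally show ?thesis .
qed

lemma inner_scalar_mult_left: "inner (c *s x) y = inner x (cnj c *s (y :: complex^'n))"
  by (simp add: inner_vec_def inner_complex_mult_left)

lemma matrix_vector_mult_in_col_space [simp]: "A *v x \<in> col_space A"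
  by (simp add: col_space_def)

lemma col_space_mult: "col_space (A ** B) = (*v) A ` col_space B"
  by (auto simp: col_space_def matrix_vector_mul_assoc[symmetric] image_iff)

lemma col_space_mult_subset: "col_space (A ** B) \<subseteq> col_space A"
  by (auto simp: col_space_def matrix_vector_mul_assoc[symmetric])

lemma subspace_col_space: "subspace (col_space (A :: complex^'n^'m))"
  unfolding col_space_def by (rule linear_subspace_image[OF _ subspace_UNIV]) simp

lemma scalar_mult_in_col_space: "u \<in> col_space A \<Longrightarrow> c *s u \<in> col_space A"
  by (auto simp: col_space_def vector_scalar_commute[symmetric])

lemma column_eq_matrix_vector_mult_axis: "column j A = A *v axis j (1 :: 'a :: comm_ring_1)"
  by (simp add: column_def matrix_vector_mult_def axis_def vec_eq_iff if_distrib cong: if_cong)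

lemma matrix_eq_iff_columns: "A = B \<longleftrightarrow> (\<forall>j. column j A = column j B)"
  by (auto simp: column_def vec_eq_iff)

lemma column_matrix_mult: "column j (A ** B) = A *v column j B"
  by (simp add: column_def matrix_matrix_mult_def matrix_vector_mult_def)

lemma col_space_subset_iff_factor:
  "col_space P \<subseteq> col_space D \<longleftrightarrow> (\<exists>H. P = D ** H)"
proof
  assume "col_space P \<subseteq> col_space D"
  then have "\<forall>j. \<exists>h. column j P = D *v h"
    by (auto simp: column_eq_matrix_vector_mult_axis col_space_def)
  then obtain h where h: "\<And>j. column j P = D *v h j" by metis
  have "P = D ** transpose (\<chi> j. h j)"
    by (simp add: matrix_eq_iff_columns column_matrix_mult h row_def)
  then show "\<exists>H. P = D ** H" ..
qed (use col_space_mult_subset in blast)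

section \<open>Orthogonal projectors\<close>

text \<open>
  Orthogonality refers to the real inner product of complex^'n, the real part of the
  Hermitian one; on the complex subspaces used here (closed under multiplication by i) the
  two notions of orthogonality agree.
\<close>

definition is_orth_proj :: "complex^'n^'n \<Rightarrow> (complex^'n) set \<Rightarrow> bool" where
  "is_orth_proj P S \<longleftrightarrow> col_space P \<subseteq> S \<and> (\<forall>x. \<forall>s\<in>S. orthogonal (x - P *v x) s)"

lemma is_orth_proj_in: "is_orth_proj P S \<Longrightarrow> P *v x \<in> S"
  by (auto simp: is_orth_proj_def)

lemma is_orth_proj_eqI:
  assumes P: "is_orth_proj P S" and "subspace S" "a \<in> S"
    and orth: "\<And>s. s \<in> S \<Longrightarrow> orthogonal (x - a) s"
  shows "P *v x = a"
proof -
  define d where "d = a - P *v x"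
  have "d \<in> S"
    unfolding d_def using assms is_orth_proj_in subspace_diff by blast
  have d_eq: "d = (x - P *v x) - (x - a)"
    by (simp add: d_def)
  have "inner d d = inner (x - P *v x) d - inner (x - a) d"
    by (subst (1) d_eq) (rule inner_diff_left)
  also have "\<dots> = 0"
    using P orth \<open>d \<in> S\<close> unfolding is_orth_proj_def orthogonal_def by simp
  finally show ?thesis
    by (simp add: d_def)
qed

lemma is_orth_proj_fixes: "is_orth_proj P S \<Longrightarrow> subspace S \<Longrightarrow> s \<in> S \<Longrightarrow> P *v s = s"
  by (rule is_orth_proj_eqI) (auto simp: orthogonal_def)

lemma conj_transpose_is_orth_proj:
  assumes P: "is_orth_proj P S"
  shows "conj_transpose P = P"
proof -
  have orth: "inner (x - P *v x) (P *v y) = 0" for x y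
    using P is_orth_proj_in[OF P] unfolding is_orth_proj_def orthogonal_def by blast
  have eq: "inner x (conj_transpose P *v y) = inner x (P *v y)" for x y
  proof -
    have "inner x (conj_transpose P *v y) = inner (P *v x) y"
      by (rule inner_matrix_vector_mult_left[symmetric])
    also have "\<dots> = inner (P *v x) (P *v y)"
      using orth[of y x] by (simp add: inner_commute[of _ "P *v x"] inner_diff_right)
    also have "\<dots> = inner x (P *v y)"
      using orth[of x y] by (simp add: inner_diff_left)
    finally show ?thesis .
  qed
  show ?thesis
  proof (rule matrix_eq[THEN iffD2], rule allI)
    fix y
    have "inner (conj_transpose P *v y - P *v y) (conj_transpose P *v y - P *v y) = 0"
      by (simp add: inner_diff_right eq)
    then show "conj_transpose P *v y = P *v y"
      by simp
  qed
qed

lemma is_orth_proj_exists: "\<exists>P. is_orth_proj P (col_space C)"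
proof -
  have "span (col_space C) = col_space C"
    by (simp add: subspace_col_space span_eq_iff)
  then have "\<forall>j. \<exists>y\<in>col_space C. \<forall>s\<in>col_space C. orthogonal (axis j 1 - y) s"
    using orthogonal_subspace_decomp_exists[of "col_space C" "axis _ 1"]
    by (metis add_diff_cancel_left')
  then obtain p where p: "\<And>j. p j \<in> col_space C"
    and p_orth: "\<And>j s. s \<in> col_space C \<Longrightarrow> orthogonal (axis j 1 - p j) s"
    by metis
  define P where "P = transpose (\<chi> j. p j)"
  have P_sum: "P *v x = (\<Sum>j\<in>UNIV. x $ j *s p j)" for x
    by (simp add: P_def matrix_mult_sum row_def)
  have "col_space P \<subseteq> col_space C"
  proof
    fix u assume "u \<in> col_space P"
    then obtain x where "u = P *v x"
      by (auto simp: col_space_def)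
    then show "u \<in> col_space C"
      unfolding P_sum by (auto intro: subspace_sum[OF subspace_col_space] scalar_mult_in_col_space p)
  qed
  moreover have "orthogonal (x - P *v x) s" if "s \<in> col_space C" for x s
  proof -
    txt \<open>Real orthogonality survives the complex coefficients x $ j since col_space C is
      closed under complex scaling.\<close>
    have "x - P *v x = (\<Sum>j\<in>UNIV. x $ j *s (axis j 1 - p j))"
      by (subst (1) basis_expansion[symmetric])
        (simp add: P_sum vector_ssub_ldistrib sum_subtractf)
    then have "inner (x - P *v x) s = (\<Sum>j\<in>UNIV. inner (axis j 1 - p j) (cnj (x $ j) *s s))"
      by (simp only: inner_sum_left inner_scalar_mult_left)
    then show ?thesis
      using p_orth scalar_mult_in_col_space[OF that] by (simp add: orthogonal_def)
  qed
  ultimately have "is_orth_proj P (col_space C)"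
    unfolding is_orth_proj_def by blast
  then show ?thesis ..
qed

lemma is_orth_proj_mult: "is_orth_proj P S \<Longrightarrow> subspace S \<Longrightarrow> col_space B \<subseteq> S \<Longrightarrow> P ** B = B"
  by (simp add: matrix_eq matrix_vector_mul_assoc[symmetric] is_orth_proj_fixes subset_iff)

lemma inverse_on_col_space_exists:
  assumes inj: "inj_on ((*v) B) (col_space C)" and P: "is_orth_proj P (col_space (B ** C))"
  obtains X where "B ** X = P" "X ** P = X" "col_space X = col_space C"
    "\<And>u. u \<in> col_space C \<Longrightarrow> X *v (B *v u) = u"
proof -
  have "col_space P \<subseteq> col_space (B ** C)"
    using P by (simp add: is_orth_proj_def)
  then obtain H where H: "P = B ** C ** H"
    using col_space_subset_iff_factor by blast
  define X where "X = C ** H"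
  have BX: "B ** X = P"
    by (simp add: X_def H matrix_mul_assoc)
  then have BX_v: "B *v (X *v v) = P *v v" for v
    by (simp add: matrix_vector_mul_assoc)
  have X_in: "X *v v \<in> col_space C" for v
    by (simp add: X_def matrix_vector_mul_assoc[symmetric])
  have P_fixes: "P *v w = w" if "w \<in> col_space (B ** C)" for w
    using is_orth_proj_fixes[OF P subspace_col_space that] .
  have XB: "X *v (B *v u) = u" if "u \<in> col_space C" for u
  proof -
    have "B *v u \<in> col_space (B ** C)"
      using that by (simp add: col_space_mult)
    then have "B *v (X *v (B *v u)) = B *v u"
      by (simp add: BX_v P_fixes)
    then show ?thesis
      using inj X_in that by (auto dest: inj_onD)
  qed
  have "X ** P = X"
  proof (rule matrix_eq[THEN iffD2], rule allI)
    fix v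
    have "B *v (X *v (P *v v)) = B *v (X *v v)"
      using is_orth_proj_in[OF P] by (simp add: BX_v P_fixes)
    then show "(X ** P) *v v = X *v v"
      using inj X_in by (auto simp: matrix_vector_mul_assoc[symmetric] dest: inj_onD)
  qed
  moreover have "col_space X = col_space C"
  proof
    show "col_space X \<subseteq> col_space C"
      using X_in by (auto simp: col_space_def[of X])
    show "col_space C \<subseteq> col_space X"
      using XB by (metis matrix_vector_mult_in_col_space subsetI)
  qed
  ultimately show thesis
    using that BX XB by blast
qed

lemma matrix_vector_mult_eq_0_iff_orthogonal:
  "A *v v = 0 \<longleftrightarrow> (\<forall>s\<in>col_space (conj_transpose A). orthogonal v s)"
proof
  assume "A *v v = 0"
  then show "\<forall>s\<in>col_space (conj_transpose A). orthogonal v s"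
    by (auto simp: col_space_def orthogonal_def inner_matrix_vector_mult_left[symmetric])
next
  assume "\<forall>s\<in>col_space (conj_transpose A). orthogonal v s"
  then have "inner (A *v v) (A *v v) = 0"
    by (simp add: inner_matrix_vector_mult_left orthogonal_def)
  then show "A *v v = 0"
    by simp
qed

lemma inj_on_col_space_conj_transpose: "inj_on ((*v) A) (col_space (conj_transpose A))"
proof (rule inj_onI)
  fix u v assume u: "u \<in> col_space (conj_transpose A)" and v: "v \<in> col_space (conj_transpose A)"
    and "A *v u = A *v v"
  then have "\<forall>s\<in>col_space (conj_transpose A). orthogonal (u - v) s"
    by (simp add: matrix_vector_mult_eq_0_iff_orthogonal[symmetric] matrix_vector_mult_diff_distrib)
  moreover have "u - v \<in> col_space (conj_transpose A)"
    using u v by (rule subspace_diff[OF subspace_col_space])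
  ultimately have "inner (u - v) (u - v) = 0"
    by (simp add: orthogonal_def)
  then show "u = v"
    by simp
qed

lemma matrix_vector_mult_orth_proj_conj_transpose:
  assumes "is_orth_proj Q (col_space (conj_transpose A))"
  shows "A *v (Q *v y) = A *v y"
proof -
  have "A *v (y - Q *v y) = 0"
    using assms by (simp add: matrix_vector_mult_eq_0_iff_orthogonal is_orth_proj_def)
  then show ?thesis
    by (simp add: matrix_vector_mult_diff_distrib)
qed

lemma image_col_space_conj_transpose: "(*v) A ` col_space (conj_transpose A) = col_space A"
proof -
  obtain Q where Q: "is_orth_proj Q (col_space (conj_transpose A))"
    using is_orth_proj_exists by blast
  have "A *v y \<in> (*v) A ` col_space (conj_transpose A)" for y
    using matrix_vector_mult_orth_proj_conj_transpose[OF Q, of y] is_orth_proj_in[OF Q]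
    by (metis image_eqI)
  then show ?thesis
    by (auto simp: col_space_def)
qed

lemma col_space_conj_transpose_eqI:
  assumes "col_space (conj_transpose X) \<subseteq> col_space C" and inj: "inj_on ((*v) X) (col_space C)"
  shows "col_space (conj_transpose X) = col_space C"
proof
  show "col_space C \<subseteq> col_space (conj_transpose X)"
  proof
    fix s assume s: "s \<in> col_space C"
    obtain Q where Q: "is_orth_proj Q (col_space (conj_transpose X))"
      using is_orth_proj_exists by blast
    have "Q *v s \<in> col_space C"
      using assms(1) is_orth_proj_in[OF Q] by blast
    moreover have "X *v (Q *v s) = X *v s"
      by (rule matrix_vector_mult_orth_proj_conj_transpose[OF Q])
    ultimately have "Q *v s = s"
      using inj s by (auto dest: inj_onD)
    then show "s \<in> col_space (conj_transpose X)"
      using is_orth_proj_in[OF Q] by metis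
  qed
qed (rule assms(1))

section \<open>The Moore--Penrose inverse\<close>

definition penrose_conditions :: "complex^'n^'m \<Rightarrow> complex^'m^'n \<Rightarrow> bool" where
  "penrose_conditions A X \<longleftrightarrow> A ** X ** A = A \<and> X ** A ** X = X \<and>
     conj_transpose (A ** X) = A ** X \<and> conj_transpose (X ** A) = X ** A"

lemma penrose_conditions_exist: "\<exists>X. penrose_conditions A X"
proof -
  obtain P where P: "is_orth_proj P (col_space A)"
    using is_orth_proj_exists by blast
  obtain Q where Q: "is_orth_proj Q (col_space (conj_transpose A))"
    using is_orth_proj_exists by blast
  have "col_space (A ** conj_transpose A) = col_space A"
    by (simp add: col_space_mult image_col_space_conj_transpose)
  then obtain X where AX: "A ** X = P" and XP: "X ** P = X"
    and XA: "\<And>u. u \<in> col_space (conj_transpose A) \<Longrightarrow> X *v (A *v u) = u"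
    using inverse_on_col_space_exists[OF inj_on_col_space_conj_transpose] P by metis
  have "X ** A = Q"
  proof (rule matrix_eq[THEN iffD2], rule allI)
    fix y
    have "X *v (A *v y) = X *v (A *v (Q *v y))"
      by (simp add: matrix_vector_mult_orth_proj_conj_transpose[OF Q])
    then show "(X ** A) *v y = Q *v y"
      by (simp add: XA is_orth_proj_in[OF Q] matrix_vector_mul_assoc[symmetric])
  qed
  moreover have "A ** X ** A = A"
    using is_orth_proj_mult[OF P subspace_col_space order_refl] by (simp add: AX)
  moreover have "X ** A ** X = X"
    by (simp add: matrix_mul_assoc[symmetric] AX XP)
  ultimately have "penrose_conditions A X"
    using conj_transpose_is_orth_proj[OF P] conj_transpose_is_orth_proj[OF Q]
    by (simp add: penrose_conditions_def AX)
  then show ?thesis ..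
qed

lemma penrose_conditions_unique:
  assumes "penrose_conditions A X" "penrose_conditions A Y"
  shows "X = Y"
proof -
  have x: "A ** X ** A = A" "X ** A ** X = X" "conj_transpose (A ** X) = A ** X"
      "conj_transpose (X ** A) = X ** A"
    and y: "A ** Y ** A = A" "Y ** A ** Y = Y" "conj_transpose (A ** Y) = A ** Y"
      "conj_transpose (Y ** A) = Y ** A"
    using assms by (simp_all add: penrose_conditions_def)
  have "X = X ** conj_transpose (A ** X)"
    using x(2,3) by (simp add: matrix_mul_assoc)
  also have "\<dots> = X ** conj_transpose (A ** Y ** A ** X)"
    using y(1) by simp
  also have "\<dots> = X ** conj_transpose (A ** X) ** conj_transpose (A ** Y)"
    by (simp add: conj_transpose_mult matrix_mul_assoc)
  also have "\<dots> = X ** A ** Y"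
    using x(2,3) y(3) by (simp add: matrix_mul_assoc)
  finally have X_eq: "X = X ** A ** Y" .
  have "Y = conj_transpose (Y ** A) ** Y"
    using y(2,4) by simp
  also have "\<dots> = conj_transpose (Y ** A ** X ** A) ** Y"
    using x(1) by (simp add: matrix_mul_assoc[symmetric])
  also have "\<dots> = conj_transpose (X ** A) ** conj_transpose (Y ** A) ** Y"
    by (simp add: conj_transpose_mult matrix_mul_assoc)
  also have "\<dots> = X ** A ** Y"
    using x(4) y(2,4) by (simp add: matrix_mul_assoc[symmetric])
  finally show ?thesis
    using X_eq by simp
qed

lemma penrose_conditions_mp_inverse: "penrose_conditions A (mp_inverse A)"
proof -
  have "mp_inverse A = (THE X. penrose_conditions A X)"
    by (simp add: mp_inverse_def penrose_conditions_def)
  then show ?thesis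
    using theI'[of "penrose_conditions A"] penrose_conditions_exist penrose_conditions_unique
    by metis
qed

lemma mp_inverse_fixes_col_space: "y \<in> col_space A \<Longrightarrow> A *v (mp_inverse A *v y) = y"
  using penrose_conditions_mp_inverse[of A]
  by (auto simp: penrose_conditions_def col_space_def matrix_vector_mul_assoc)

section \<open>The index\<close>

lemma mat_pow_Suc_right: "mat_pow A (Suc k) = mat_pow A k ** A"
  by (induction k) (simp_all add: matrix_mul_assoc)

lemma mat_pow_1: "mat_pow A 1 = A"
  by simp

lemma col_space_mat_pow_Suc: "col_space (mat_pow A (Suc k)) = (*v) A ` col_space (mat_pow A k)"
  by (simp add: col_space_mult)

lemma col_space_mat_pow_antimono: "k \<le> j \<Longrightarrow> col_space (mat_pow A j) \<subseteq> col_space (mat_pow A k)"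
proof (induction j rule: dec_induct)
  case (step j)
  then show ?case
    using col_space_mult_subset[of "mat_pow A j" A] by (metis mat_pow_Suc_right order_trans)
qed simp

lemma col_space_mat_pow_stabilizes: "\<exists>k. col_space (mat_pow A k) = col_space (mat_pow A (Suc k))"
proof (rule ccontr)
  assume "\<nexists>k. col_space (mat_pow A k) = col_space (mat_pow A (Suc k))"
  then have "col_space (mat_pow A (Suc k)) \<subset> col_space (mat_pow A k)" for k
    using col_space_mat_pow_antimono[of k "Suc k" A] by auto
  then have dim_less: "dim (col_space (mat_pow A (Suc k))) < dim (col_space (mat_pow A k))" for k
    using dim_psubset by (metis span_eq_iff subspace_col_space)
  have "dim (col_space (mat_pow A k)) + k \<le> dim (col_space (mat_pow A 0))" for k
  proof (induction k)
    case (Suc k)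
    then show ?case
      using dim_less[of k] by (simp del: mat_pow.simps)
  qed simp
  moreover have "dim (col_space (mat_pow A 0)) \<le> DIM(complex^'a)"
    by (rule dim_subset_UNIV)
  ultimately show False
    by (metis add_leD2 not_less_eq_eq)
qed

lemma col_space_mat_pow_Suc_mat_index:
  "col_space (mat_pow A (Suc (mat_index A))) = col_space (mat_pow A (mat_index A))"
  unfolding mat_index_def by (rule LeastI_ex[OF col_space_mat_pow_stabilizes, symmetric])

lemma image_col_space_mat_pow_mat_index:
  "(*v) A ` col_space (mat_pow A (mat_index A)) = col_space (mat_pow A (mat_index A))"
  using col_space_mat_pow_Suc_mat_index[of A] by (simp add: col_space_mat_pow_Suc del: mat_pow.simps)

lemma col_space_mat_pow_ge_mat_index:
  "mat_index A \<le> j \<Longrightarrow> col_space (mat_pow A j) = col_space (mat_pow A (mat_index A))"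
proof (induction j rule: dec_induct)
  case (step j)
  then show ?case
    by (simp add: col_space_mat_pow_Suc image_col_space_mat_pow_mat_index del: mat_pow.simps)
qed simp

lemma mat_index_le:
  assumes "col_space (mat_pow A j) \<subseteq> col_space (mat_pow A (mat_index A))"
  shows "mat_index A \<le> j"
proof (rule ccontr)
  assume "\<not> mat_index A \<le> j"
  then have "col_space (mat_pow A (mat_index A)) \<subseteq> col_space (mat_pow A (Suc j))"
    by (simp add: col_space_mat_pow_antimono del: mat_pow.simps)
  then have "col_space (mat_pow A j) = col_space (mat_pow A (Suc j))"
    using assms col_space_mat_pow_antimono[of j "Suc j" A] by auto
  then have "mat_index A \<le> j"
    unfolding mat_index_def by (rule Least_le)
  with \<open>\<not> mat_index A \<le> j\<close> show False ..
qed

text \<open>A basis of S is mapped to a spanning set of S with at most dim S elements, hence to a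
  basis.\<close>

lemma inj_on_if_linear_image_eq:
  fixes f :: "'a::euclidean_space \<Rightarrow> 'a"
  assumes f: "linear f" and S: "subspace S" and f_S: "f ` S = S"
  shows "inj_on f S"
proof -
  obtain B where B: "B \<subseteq> S" "independent B" "S \<subseteq> span B" "card B = dim S"
    using basis_exists[of S] by blast
  have "finite B"
    using B(2) independent_bound by blast
  have span_B: "span B = S"
    using B S by (simp add: span_subspace)
  then have span_fB: "span (f ` B) = S"
    using f_S f by (simp add: span_linear_image)
  then have "card B \<le> card (f ` B)"
    using dim_le_card[of S "f ` B"] \<open>finite B\<close> B(4) by auto
  then have card_fB: "card (f ` B) = card B"
    using card_image_le[OF \<open>finite B\<close>, of f] by simp
  then have "inj_on f B"
    using \<open>finite B\<close> by (simp add: eq_card_imp_inj_on)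
  moreover have "independent (f ` B)"
    using card_eq_dim[of "f ` B" S] card_fB B f_S span_fB \<open>finite B\<close> by auto
  ultimately have "inj_on f (span B)"
    using f linear_inj_on_span_iff_independent_image by blast
  then show ?thesis
    using span_B by simp
qed

lemma inj_on_col_space_mat_pow_mat_index:
  "inj_on ((*v) A) (col_space (mat_pow A (mat_index A)))"
  by (rule inj_on_if_linear_image_eq[OF matrix_vector_mul_linear subspace_col_space
        image_col_space_mat_pow_mat_index])

section \<open>The core-EP inverse\<close>

definition core_EP_conditions :: "complex^'n^'n \<Rightarrow> complex^'n^'n \<Rightarrow> bool" where
  "core_EP_conditions A X \<longleftrightarrow> X ** A ** X = X \<and> col_space X = col_space (conj_transpose X) \<and>
     col_space (conj_transpose X) = col_space (mat_pow A (mat_index A))"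

lemma core_EP_conditions_exist: "\<exists>X. core_EP_conditions A X"
proof -
  define S where "S = col_space (mat_pow A (mat_index A))"
  obtain P where P: "is_orth_proj P S"
    unfolding S_def using is_orth_proj_exists by blast
  have "col_space (A ** mat_pow A (mat_index A)) = S"
    by (simp add: S_def col_space_mult image_col_space_mat_pow_mat_index del: mat_pow.simps)
  then obtain X where AX: "A ** X = P" and XP: "X ** P = X" and X_range: "col_space X = S"
    using inverse_on_col_space_exists[OF inj_on_col_space_mat_pow_mat_index] P
    unfolding S_def by metis
  have P_fixes: "s \<in> S \<Longrightarrow> P *v s = s" for s
    using is_orth_proj_fixes[OF P] by (simp add: S_def subspace_col_space)
  have "conj_transpose X = P ** conj_transpose X"
    using conj_transpose_mult[of X P] by (simp add: XP conj_transpose_is_orth_proj[OF P])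
  then have "col_space (conj_transpose X) \<subseteq> col_space P"
    by (metis col_space_mult_subset)
  then have "col_space (conj_transpose X) \<subseteq> S"
    using P by (auto simp: is_orth_proj_def)
  moreover have "inj_on ((*v) X) S"
  proof (rule inj_onI)
    fix u v assume "u \<in> S" "v \<in> S" "X *v u = X *v v"
    then have "(A ** X) *v u = (A ** X) *v v"
      by (simp add: matrix_vector_mul_assoc[symmetric])
    then show "u = v"
      using \<open>u \<in> S\<close> \<open>v \<in> S\<close> by (simp add: AX P_fixes)
  qed
  ultimately have "col_space (conj_transpose X) = S"
    unfolding S_def by (rule col_space_conj_transpose_eqI)
  moreover have "X ** A ** X = X"
    by (simp add: matrix_mul_assoc[symmetric] AX XP)
  ultimately have "core_EP_conditions A X"
    by (simp add: core_EP_conditions_def X_range S_def)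
  then show ?thesis ..
qed

lemma core_EP_conditions_mult_eq_orth_proj:
  assumes X: "core_EP_conditions A X"
    and P: "is_orth_proj P (col_space (mat_pow A (mat_index A)))"
  shows "A ** X = P"
proof (rule matrix_eq[THEN iffD2], rule allI)
  fix v
  have X_range: "col_space X = col_space (mat_pow A (mat_index A))"
    and X_adj_range: "col_space (conj_transpose X) = col_space (mat_pow A (mat_index A))"
    and XAX: "X ** A ** X = X"
    using X by (simp_all add: core_EP_conditions_def)
  have "A *v (X *v v) \<in> col_space (mat_pow A (mat_index A))"
    using X_range image_col_space_mat_pow_mat_index[of A] matrix_vector_mult_in_col_space[of X v]
    by blast
  moreover have "orthogonal (v - A *v (X *v v)) s"
    if "s \<in> col_space (mat_pow A (mat_index A))" for s
  proof -
    have "s \<in> col_space (conj_transpose X)"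
      using that X_adj_range by simp
    then obtain w where s: "s = conj_transpose X *v w"
      by (auto simp: col_space_def)
    have "X *v (v - A *v (X *v v)) = 0"
      using XAX by (simp add: matrix_vector_mult_diff_distrib matrix_vector_mul_assoc
          matrix_mul_assoc)
    then show ?thesis
      by (simp add: s orthogonal_def inner_matrix_vector_mult_left[symmetric])
  qed
  ultimately show "(A ** X) *v v = P *v v"
    by (simp add: is_orth_proj_eqI[OF P subspace_col_space] matrix_vector_mul_assoc[symmetric])
qed

lemma core_EP_conditions_unique:
  assumes X: "core_EP_conditions A X" and Y: "core_EP_conditions A Y"
  shows "X = Y"
proof (rule matrix_eq[THEN iffD2], rule allI)
  fix v
  obtain P where P: "is_orth_proj P (col_space (mat_pow A (mat_index A)))"
    using is_orth_proj_exists by blast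
  have "A *v (X *v v) = A *v (Y *v v)"
    using core_EP_conditions_mult_eq_orth_proj[OF X P] core_EP_conditions_mult_eq_orth_proj[OF Y P]
    by (simp add: matrix_vector_mul_assoc)
  moreover have "X *v v \<in> col_space (mat_pow A (mat_index A))"
    "Y *v v \<in> col_space (mat_pow A (mat_index A))"
    using X Y unfolding core_EP_conditions_def by (metis matrix_vector_mult_in_col_space)+
  ultimately show "X *v v = Y *v v"
    using inj_on_col_space_mat_pow_mat_index by (auto dest: inj_onD)
qed

lemma core_EP_conditions_core_EP: "core_EP_conditions A (core_EP A)"
proof -
  have "core_EP A = (THE X. core_EP_conditions A X)"
    by (simp add: core_EP_def core_EP_conditions_def)
  then show ?thesis
    using theI'[of "core_EP_conditions A"] core_EP_conditions_exist core_EP_conditions_unique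
    by metis
qed

lemma col_space_core_EP: "col_space (core_EP A) = col_space (mat_pow A (mat_index A))"
  using core_EP_conditions_core_EP[of A] by (simp add: core_EP_conditions_def)

lemma mult_core_EP_fixes:
  assumes "s \<in> col_space (mat_pow A (mat_index A))"
  shows "A *v (core_EP A *v s) = s"
proof -
  obtain P where P: "is_orth_proj P (col_space (mat_pow A (mat_index A)))"
    using is_orth_proj_exists by blast
  then show ?thesis
    using core_EP_conditions_mult_eq_orth_proj[OF core_EP_conditions_core_EP P]
      is_orth_proj_fixes[OF P subspace_col_space assms]
    by (simp add: matrix_vector_mul_assoc)
qed

lemma core_EP_mult_fixes:
  assumes s: "s \<in> col_space (mat_pow A (mat_index A))"
  shows "core_EP A *v (A *v s) = s"
proof -
  have "A *v s \<in> col_space (mat_pow A (mat_index A))"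
    using s image_col_space_mat_pow_mat_index[of A] by blast
  then have "A *v (core_EP A *v (A *v s)) = A *v s"
    by (rule mult_core_EP_fixes)
  moreover have "core_EP A *v (A *v s) \<in> col_space (mat_pow A (mat_index A))"
    using col_space_core_EP[of A] matrix_vector_mult_in_col_space by blast
  ultimately show ?thesis
    using inj_on_col_space_mat_pow_mat_index s by (auto dest: inj_onD)
qed

lemma mat_pow_core_EP_mult_fixes:
  "s \<in> col_space (mat_pow A (mat_index A)) \<Longrightarrow>
    mat_pow (core_EP A) i *v (mat_pow A i *v s) = s"
proof (induction i arbitrary: s)
  case (Suc i)
  have "A *v s \<in> col_space (mat_pow A (mat_index A))"
    using Suc.prems image_col_space_mat_pow_mat_index[of A] by blast
  then have "mat_pow (core_EP A) i *v (mat_pow A i *v (A *v s)) = A *v s"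
    by (rule Suc.IH)
  then show ?case
    using core_EP_mult_fixes[OF Suc.prems]
    by (simp only: mat_pow.simps(2)[of "core_EP A"] mat_pow_Suc_right[of A]
        matrix_vector_mul_assoc[symmetric])
qed simp

section \<open>The \<open>m\<close>-weak core inverse\<close>

lemma weak_core_m_eq_core_EP_mult:
  "weak_core_m m A = core_EP A ** (mat_pow (core_EP A) m ** mat_pow A m **
     (mat_pow A m ** mp_inverse (mat_pow A m)))"
  unfolding weak_core_m_def weak_group_m_def by (simp add: matrix_mul_assoc)

lemma col_space_mult_weak_core_m:
  "col_space (A ** weak_core_m m A) \<subseteq> col_space (mat_pow A (mat_index A))"
proof -
  have "col_space (A ** weak_core_m m A) \<subseteq> col_space (A ** core_EP A)"
    by (metis col_space_mult_subset weak_core_m_eq_core_EP_mult matrix_mul_assoc)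
  also have "\<dots> = col_space (mat_pow A (mat_index A))"
    by (simp add: col_space_mult col_space_core_EP image_col_space_mat_pow_mat_index del: mat_pow.simps)
  finally show ?thesis .
qed

lemma mult_weak_core_m_mult:
  assumes index: "mat_index A \<le> 1" and "m \<ge> 1"
  shows "A ** weak_core_m m A ** A = A"
proof (rule matrix_eq[THEN iffD2], rule allI)
  fix x
  let ?E = "core_EP A"
  have "col_space A = col_space (mat_pow A (mat_index A))"
    using col_space_mat_pow_ge_mat_index[OF index] by (simp only: mat_pow_1)
  then have Ax_index: "A *v x \<in> col_space (mat_pow A (mat_index A))"
    by (metis matrix_vector_mult_in_col_space)
  moreover have "col_space (mat_pow A m) = col_space (mat_pow A (mat_index A))"
    using index \<open>m \<ge> 1\<close> by (intro col_space_mat_pow_ge_mat_index) simp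
  ultimately have Ax_m: "A *v x \<in> col_space (mat_pow A m)"
    by simp
  have "(A ** weak_core_m m A ** A) *v x = A *v (?E *v (mat_pow ?E m *v (mat_pow A m *v
      (mat_pow A m *v (mp_inverse (mat_pow A m) *v (A *v x))))))"
    by (simp add: weak_core_m_eq_core_EP_mult matrix_vector_mul_assoc[symmetric])
  also have "\<dots> = A *v (?E *v (mat_pow ?E m *v (mat_pow A m *v (A *v x))))"
    by (simp only: mp_inverse_fixes_col_space[OF Ax_m])
  also have "\<dots> = A *v (?E *v (A *v x))"
    by (simp only: mat_pow_core_EP_mult_fixes[OF Ax_index])
  also have "\<dots> = A *v x"
    by (rule mult_core_EP_fixes[OF Ax_index])
  finally show "(A ** weak_core_m m A ** A) *v x = A *v x" .
qed

theorem theorem4p14: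
  fixes A :: "complex^'n^'n" and m :: nat
  assumes "m \<ge> 1"
  shows "A ** weak_core_m m A ** A = A \<longleftrightarrow> mat_index A \<le> 1"
proof
  assume "A ** weak_core_m m A ** A = A"
  then have "col_space (mat_pow A 1) \<subseteq> col_space (A ** weak_core_m m A)"
    by (metis col_space_mult_subset mat_pow_1)
  then show "mat_index A \<le> 1"
    using col_space_mult_weak_core_m by (blast intro: mat_index_le)
next
  assume "mat_index A \<le> 1"
  then show "A ** weak_core_m m A ** A = A"
    using assms by (rule mult_weak_core_m_mult)
qed

end
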